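(* A class $\mathcal{C}$ of finite complete bipartite graphs is $\mathrm{MSO}_2$-orderable if, and only if, there is a constant $s\in\mathbb{N}$ such that for all $K_{n,m}\in\mathcal{C}$ with $n\le m$ we have $m\le 2^{s(n+1)}$.
   Context: For $G=\langle V,E\rangle$, $\lceil G\rceil=\langle V\cup E,\mathrm{inc}\rangle$ (universe $V\cup E$, incidence relation). An MSO-formula $\varphi(x,y;Z_0,\dots,Z_{k-1})$ defines an order on a class $\mathcal{K}$ of structures if for every non-empty $\mathfrak{A}\in\mathcal{K}$ there are $P_0,\dots,P_{k-1}\subseteq A$ with $\{(a,b):\mathfrak{A}\models\varphi(a,b;\bar P)\}$ a linear order on $A$. A graph class is $\mathrm{MSO}_2$-orderable if some MSO-formula defines an order on $\{\lceil G\rceil : G\in\mathcal{C}\}$. *)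

theory Defs
  imports Main
begin

datatype mso =
    Rel nat nat
  | Eq nat nat
  | Mem nat nat          (* x_i \<in> X_j *)
  | Neg mso
  | Conj mso mso
  | ExI nat mso
  | ExS nat mso

fun fv :: "mso \<Rightarrow> nat set" where
  "fv (Rel i j) = {i, j}"
| "fv (Eq i j) = {i, j}"
| "fv (Mem i j) = {i}"
| "fv (Neg f) = fv f"
| "fv (Conj f g) = fv f \<union> fv g"
| "fv (ExI i f) = fv f - {i}"
| "fv (ExS j f) = fv f"

fun fsv :: "mso \<Rightarrow> nat set" where
  "fsv (Rel i j) = {}"
| "fsv (Eq i j) = {}"
| "fsv (Mem i j) = {j}"
| "fsv (Neg f) = fsv f"
| "fsv (Conj f g) = fsv f \<union> fsv g"
| "fsv (ExI i f) = fsv f"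
| "fsv (ExS j f) = fsv f - {j}"

fun sat :: "'a set \<times> ('a \<times> 'a) set \<Rightarrow> (nat \<Rightarrow> 'a) \<Rightarrow> (nat \<Rightarrow> 'a set) \<Rightarrow> mso \<Rightarrow> bool" where
  "sat S \<alpha> \<beta> (Rel i j) = ((\<alpha> i, \<alpha> j) \<in> snd S)"
| "sat S \<alpha> \<beta> (Eq i j) = (\<alpha> i = \<alpha> j)"
| "sat S \<alpha> \<beta> (Mem i j) = (\<alpha> i \<in> \<beta> j)"
| "sat S \<alpha> \<beta> (Neg f) = (\<not> sat S \<alpha> \<beta> f)"
| "sat S \<alpha> \<beta> (Conj f g) = (sat S \<alpha> \<beta> f \<and> sat S \<alpha> \<beta> g)"
| "sat S \<alpha> \<beta> (ExI i f) = (\<exists>a\<in>fst S. sat S (\<alpha>(i := a)) \<beta> f)"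
| "sat S \<alpha> \<beta> (ExS j f) = (\<exists>P. P \<subseteq> fst S \<and> sat S \<alpha> (\<beta>(j := P)) f)"

text \<open>Assignment x_0 := a, x_1 := b (other individual variables do not occur free).\<close>
definition asg2 :: "'a \<Rightarrow> 'a \<Rightarrow> nat \<Rightarrow> 'a" where
  "asg2 a b = (\<lambda>i. if i = 0 then a else b)"

text \<open>phi(x,y;Z_0..Z_{k-1}) (x = x_0, y = x_1) defines an order on the class K of structures.\<close>
definition mso_defines_order :: "mso \<Rightarrow> nat \<Rightarrow> ('a set \<times> ('a \<times> 'a) set) set \<Rightarrow> bool" where
  "mso_defines_order \<phi> k K \<longleftrightarrow>
     fv \<phi> \<subseteq> {0, 1} \<and> fsv \<phi> \<subseteq> {..<k} \<and>
     (\<forall>S\<in>K. fst S \<noteq> {} \<longrightarrow>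
        (\<exists>P :: nat \<Rightarrow> 'a set. (\<forall>i<k. P i \<subseteq> fst S) \<and>
           linear_order_on (fst S)
             {(a, b). a \<in> fst S \<and> b \<in> fst S \<and> sat S (asg2 a b) P \<phi>}))"

definition is_graph :: "'v set \<times> 'v set set \<Rightarrow> bool" where
  "is_graph G \<longleftrightarrow> (\<forall>e\<in>snd G. \<exists>u v. u \<noteq> v \<and> u \<in> fst G \<and> v \<in> fst G \<and> e = {u, v})"

definition incidence_structure :: "'v set \<times> 'v set set \<Rightarrow> ('v + 'v set) set \<times> (('v + 'v set) \<times> ('v + 'v set)) set" where
  "incidence_structure G =
     (Inl ` fst G \<union> Inr ` snd G,
      {(Inl v, Inr e) | v e. v \<in> fst G \<and> e \<in> snd G \<and> v \<in> e})"

definition MSO2_orderable :: "('v set \<times> 'v set set) set \<Rightarrow> bool" where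
  "MSO2_orderable C \<longleftrightarrow> (\<exists>\<phi> k. mso_defines_order \<phi> k (incidence_structure ` C))"

definition is_K :: "'v set \<times> 'v set set \<Rightarrow> nat \<Rightarrow> nat \<Rightarrow> bool" where
  "is_K G n m \<longleftrightarrow> finite (fst G) \<and>
     (\<exists>A B. A \<inter> B = {} \<and> A \<union> B = fst G \<and> card A = n \<and> card B = m \<and>
            snd G = {{a, b} | a b. a \<in> A \<and> b \<in> B})"

definition finite_complete_bipartite :: "'v set \<times> 'v set set \<Rightarrow> bool" where
  "finite_complete_bipartite G \<longleftrightarrow> (\<exists>n m. is_K G n m)"

end

theory Submission
  imports Defs "HOL-Library.List_Lexorder" "HOL-Library.Product_Lexorder"
begin

text \<open>Let \<open>K_{A,B}\<close> with \<open>|A| = n \<le> m = |B|\<close> be ordered by a formula with \<open>k\<close> set parameters. If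
  \<open>m > 2^(k(n+1))\<close>, two vertices \<open>b \<noteq> b'\<close> of \<open>B\<close> have the same parameter profile: \<open>b\<close> and \<open>b'\<close> lie
  in the same parameter sets, and so do the edges \<open>{a, b}\<close> and \<open>{a, b'}\<close> for every \<open>a \<in> A\<close>.
  Exchanging \<open>b\<close> and \<open>b'\<close> is then an automorphism of the incidence structure fixing every
  parameter, so it preserves the defined order, which is impossible for a linear order.

  Conversely, if \<open>m \<le> 2^(s(n+1))\<close>, give each \<open>b \<in> B\<close> its own word of length \<open>n + 1\<close> over
  \<open>2^s\<close> colours, written on \<open>b\<close> and on its \<open>n\<close> edges. An injection of \<open>A\<close> into \<open>B\<close>, recorded
  by two more parameters, makes an order of \<open>A\<close> definable; with it the words can be compared
  lexicographically, which orders \<open>B\<close>, and the edges are ordered by their endpoints.\<close>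

section \<open>Definable orders are rigid\<close>

lemma sat_cong:
  assumes "\<forall>i\<in>fv \<phi>. \<alpha> i = \<alpha>' i" and "\<forall>j\<in>fsv \<phi>. \<beta> j = \<beta>' j"
  shows "sat S \<alpha> \<beta> \<phi> = sat S \<alpha>' \<beta>' \<phi>"
  using assms
proof (induction \<phi> arbitrary: \<alpha> \<alpha>' \<beta> \<beta>')
  case (ExI i f)
  show ?case using ExI.prems by (simp, intro bex_cong refl ExI.IH) auto
next
  case (ExS j f)
  show ?case using ExS.prems by (simp, intro ex_cong1 conj_cong refl ExS.IH) auto
next
  case (Neg f)
  show ?case using Neg.prems Neg.IH[of \<alpha> \<alpha>' \<beta> \<beta>'] by simp
next
  case (Conj f g)
  show ?case using Conj.prems Conj.IH[of \<alpha> \<alpha>' \<beta> \<beta>'] by simp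
qed auto

lemma ex_subset_bij_image_iff:
  assumes bij: "bij \<sigma>" and "\<sigma> ` U = U"
  shows "(\<exists>P. P \<subseteq> U \<and> \<Phi> (\<sigma> ` P)) \<longleftrightarrow> (\<exists>Q. Q \<subseteq> U \<and> \<Phi> Q)"
proof -
  have subset: "P \<subseteq> U \<longleftrightarrow> \<sigma> ` P \<subseteq> U" for P
  proof -
    have "P \<subseteq> U \<longleftrightarrow> \<sigma> ` P \<subseteq> \<sigma> ` U"
      using bij by (simp add: bij_is_inj inj_image_subset_iff)
    then show ?thesis
      using assms(2) by simp
  qed
  have "\<sigma> ` (inv \<sigma> ` Q) = Q" for Q
    using bij by (simp add: image_comp bij_is_surj surj_f_inv_f)
  then show ?thesis
    using subset by metis
qed

lemma sat_automorphism:
  assumes bij: "bij \<sigma>" and univ: "\<sigma> ` fst S = fst S"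
    and rel: "\<And>x y. (x, y) \<in> snd S \<longleftrightarrow> (\<sigma> x, \<sigma> y) \<in> snd S"
  shows "sat S \<alpha> \<beta> \<phi> \<longleftrightarrow> sat S (\<sigma> \<circ> \<alpha>) (\<lambda>j. \<sigma> ` \<beta> j) \<phi>"
proof (induction \<phi> arbitrary: \<alpha> \<beta>)
  case (Rel i j) then show ?case using rel[of "\<alpha> i" "\<alpha> j"] by simp
next
  case (Eq i j) then show ?case using bij by (simp add: bij_def inj_eq)
next
  case (Mem i j) then show ?case using bij by (simp add: bij_def inj_image_mem_iff)
next
  case (ExI i f)
  have "(\<exists>a\<in>fst S. sat S (\<alpha>(i := a)) \<beta> f) \<longleftrightarrow>
        (\<exists>a\<in>fst S. sat S ((\<sigma> \<circ> \<alpha>)(i := \<sigma> a)) (\<lambda>j. \<sigma> ` \<beta> j) f)"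
  proof (intro bex_cong refl)
    show "sat S (\<alpha>(i := a)) \<beta> f \<longleftrightarrow> sat S ((\<sigma> \<circ> \<alpha>)(i := \<sigma> a)) (\<lambda>j. \<sigma> ` \<beta> j) f" for a
      using ExI.IH[of "\<alpha>(i := a)" \<beta>] by (simp only: fun_upd_comp)
  qed
  also have "\<dots> \<longleftrightarrow> (\<exists>a\<in>fst S. sat S ((\<sigma> \<circ> \<alpha>)(i := a)) (\<lambda>j. \<sigma> ` \<beta> j) f)"
    using univ by (metis imageE imageI)
  finally show ?case by (simp add: comp_def)
next
  case (ExS j f)
  have lift: "sat S \<alpha> (\<beta>(j := P)) f \<longleftrightarrow> sat S (\<sigma> \<circ> \<alpha>) ((\<lambda>j. \<sigma> ` \<beta> j)(j := \<sigma> ` P)) f" for P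
  proof -
    have upd: "(\<lambda>i. \<sigma> ` (\<beta>(j := P)) i) = (\<lambda>i. \<sigma> ` \<beta> i)(j := \<sigma> ` P)"
      by (simp add: fun_eq_iff)
    show ?thesis using ExS.IH[of \<alpha> "\<beta>(j := P)"] unfolding upd .
  qed
  have "(\<exists>P. P \<subseteq> fst S \<and> sat S \<alpha> (\<beta>(j := P)) f) \<longleftrightarrow>
        (\<exists>P. P \<subseteq> fst S \<and> sat S (\<sigma> \<circ> \<alpha>) ((\<lambda>j. \<sigma> ` \<beta> j)(j := \<sigma> ` P)) f)"
    using lift by simp
  also have "\<dots> \<longleftrightarrow> (\<exists>Q. Q \<subseteq> fst S \<and> sat S (\<sigma> \<circ> \<alpha>) ((\<lambda>j. \<sigma> ` \<beta> j)(j := Q)) f)"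
    by (rule ex_subset_bij_image_iff[OF bij univ, where \<Phi> = "\<lambda>Q. sat S (\<sigma> \<circ> \<alpha>) ((\<lambda>j. \<sigma> ` \<beta> j)(j := Q)) f"])
  finally show ?case by (simp add: comp_def)
qed simp_all

lemma involution_image_eq:
  assumes invol: "\<And>x. \<sigma> (\<sigma> x) = x" and "\<sigma> ` X \<subseteq> X"
  shows "\<sigma> ` X = X"
proof
  show "X \<subseteq> \<sigma> ` X"
  proof
    fix y assume "y \<in> X"
    then have "\<sigma> y \<in> X" using assms(2) by blast
    then show "y \<in> \<sigma> ` X" using invol[of y] by (metis imageI)
  qed
qed (rule assms(2))

lemma definable_order_fixed_by_involution:
  assumes order: "linear_order_on (fst S) {(a, b). a \<in> fst S \<and> b \<in> fst S \<and> sat S (asg2 a b) P \<phi>}"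
    and params: "fsv \<phi> \<subseteq> {..<k}"
    and invol: "\<And>x. \<sigma> (\<sigma> x) = x"
    and univ: "\<sigma> ` fst S \<subseteq> fst S"
    and rel: "\<And>x y. (x, y) \<in> snd S \<Longrightarrow> (\<sigma> x, \<sigma> y) \<in> snd S"
    and fixes_params: "\<And>i. i < k \<Longrightarrow> \<sigma> ` P i \<subseteq> P i"
    and x: "x \<in> fst S"
  shows "\<sigma> x = x"
proof (rule ccontr)
  assume moved: "\<sigma> x \<noteq> x"
  have bij: "bij \<sigma>"
    using invol by (metis bijI injI surjI)
  have rel_iff: "(u, w) \<in> snd S \<longleftrightarrow> (\<sigma> u, \<sigma> w) \<in> snd S" for u w
    using rel[of u w] rel[of "\<sigma> u" "\<sigma> w"] invol by auto
  have swap: "sat S (asg2 u w) P \<phi> \<longleftrightarrow> sat S (asg2 (\<sigma> u) (\<sigma> w)) P \<phi>" for u w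
  proof -
    have "sat S (asg2 u w) P \<phi> \<longleftrightarrow> sat S (\<sigma> \<circ> asg2 u w) (\<lambda>j. \<sigma> ` P j) \<phi>"
      by (rule sat_automorphism[OF bij involution_image_eq[OF invol univ] rel_iff])
    also have "\<dots> \<longleftrightarrow> sat S (asg2 (\<sigma> u) (\<sigma> w)) P \<phi>"
      using params involution_image_eq[OF invol fixes_params] by (intro sat_cong) (auto simp: asg2_def)
    finally show ?thesis .
  qed
  let ?r = "{(a, b). a \<in> fst S \<and> b \<in> fst S \<and> sat S (asg2 a b) P \<phi>}"
  have x': "\<sigma> x \<in> fst S"
    using univ x by blast
  have "(x, \<sigma> x) \<in> ?r \<or> (\<sigma> x, x) \<in> ?r"
    using order moved x x' unfolding linear_order_on_def total_on_def by blast
  moreover have "(x, \<sigma> x) \<in> ?r \<longleftrightarrow> (\<sigma> x, x) \<in> ?r"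
    using swap[of x "\<sigma> x"] invol[of x] x x' by simp
  ultimately have "(x, \<sigma> x) \<in> ?r" "(\<sigma> x, x) \<in> ?r"
    by blast+
  then show False
    using order moved unfolding linear_order_on_def partial_order_on_def antisym_def by blast
qed

section \<open>Complete bipartite graphs with a large side are not orderable\<close>

definition complete_bipartite :: "'v set \<Rightarrow> 'v set \<Rightarrow> 'v set \<times> 'v set set" where
  "complete_bipartite A B = (A \<union> B, {{a, b} | a b. a \<in> A \<and> b \<in> B})"

lemma complete_bipartite_commute: "complete_bipartite A B = complete_bipartite B A"
  by (auto simp: complete_bipartite_def insert_commute)

lemma is_K_complete_bipartite:
  assumes "A \<inter> B = {}" "finite A" "finite B"
  shows "is_K (complete_bipartite A B) (card A) (card B)"
  unfolding is_K_def complete_bipartite_def fst_conv snd_conv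
  using assms finite_UnI by blast

lemma is_KE:
  assumes "is_K G n m"
  obtains A B where "A \<inter> B = {}" "finite A" "finite B" "card A = n" "card B = m"
    "G = complete_bipartite A B"
proof -
  obtain A B where AB: "A \<inter> B = {}" "A \<union> B = fst G" "card A = n" "card B = m"
    "snd G = {{a, b} | a b. a \<in> A \<and> b \<in> B}" and fin: "finite (fst G)"
    using assms unfolding is_K_def by blast
  have "finite A" "finite B"
    using fin AB(2) by (metis finite_Un)+
  moreover have "G = complete_bipartite A B"
    using AB(2,5) by (simp add: complete_bipartite_def prod_eq_iff)
  ultimately show ?thesis
    using AB(1,3,4) by (intro that)
qed

lemma is_K_sym:
  assumes "is_K G n m"
  shows "is_K G m n"
proof -
  obtain A B where "A \<inter> B = {}" "finite A" "finite B" "card A = n" "card B = m" "G = complete_bipartite A B"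
    using assms by (rule is_KE)
  then show ?thesis
    using is_K_complete_bipartite[of B A] by (simp add: Int_commute complete_bipartite_commute)
qed

lemma incidence_structure_involution:
  assumes invol: "\<And>v. \<tau> (\<tau> v) = v"
    and vertices: "\<tau> ` fst G \<subseteq> fst G"
    and edges: "\<And>e. e \<in> snd G \<Longrightarrow> \<tau> ` e \<in> snd G"
  shows "\<And>x. map_sum \<tau> (image \<tau>) (map_sum \<tau> (image \<tau>) x) = x"
    and "map_sum \<tau> (image \<tau>) ` fst (incidence_structure G) \<subseteq> fst (incidence_structure G)"
    and "\<And>x y. (x, y) \<in> snd (incidence_structure G) \<Longrightarrow>
           (map_sum \<tau> (image \<tau>) x, map_sum \<tau> (image \<tau>) y) \<in> snd (incidence_structure G)"
proof -
  show "map_sum \<tau> (image \<tau>) (map_sum \<tau> (image \<tau>) x) = x" for x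
    using invol by (cases x) (simp_all add: image_image)
  show "map_sum \<tau> (image \<tau>) ` fst (incidence_structure G) \<subseteq> fst (incidence_structure G)"
    using vertices edges by (auto simp: incidence_structure_def)
  show "(map_sum \<tau> (image \<tau>) x, map_sum \<tau> (image \<tau>) y) \<in> snd (incidence_structure G)"
    if "(x, y) \<in> snd (incidence_structure G)" for x y
    using that vertices edges by (auto simp: incidence_structure_def)
qed

definition vertex_swap :: "'v \<Rightarrow> 'v \<Rightarrow> 'v \<Rightarrow> 'v" where
  "vertex_swap b b' v = (if v = b then b' else if v = b' then b else v)"

definition incidence_swap :: "'v \<Rightarrow> 'v \<Rightarrow> 'v + 'v set \<Rightarrow> 'v + 'v set" where
  "incidence_swap b b' = map_sum (vertex_swap b b') (image (vertex_swap b b'))"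

text \<open>The elements of the incidence structure of \<open>K_{A,B}\<close> that belong to \<open>b \<in> B\<close>: the vertex itself
  (index \<open>None\<close>) and its edge to \<open>a \<in> A\<close> (index \<open>Some a\<close>).\<close>

definition incidence_node :: "'v \<Rightarrow> 'v option \<Rightarrow> 'v + 'v set" where
  "incidence_node b z = (case z of None \<Rightarrow> Inl b | Some a \<Rightarrow> Inr {a, b})"

lemma incidence_swap_automorphism:
  assumes "A \<inter> B = {}" "b \<in> B" "b' \<in> B"
  defines "S \<equiv> incidence_structure (complete_bipartite A B)"
  shows "\<And>x. incidence_swap b b' (incidence_swap b b' x) = x"
    and "incidence_swap b b' ` fst S \<subseteq> fst S"
    and "\<And>x y. (x, y) \<in> snd S \<Longrightarrow> (incidence_swap b b' x, incidence_swap b b' y) \<in> snd S"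
proof -
  let ?\<tau> = "vertex_swap b b'"
  have fixes_A: "?\<tau> a = a" if "a \<in> A" for a
    using that assms(1-3) by (auto simp: vertex_swap_def)
  have invol: "?\<tau> (?\<tau> v) = v" for v
    by (simp add: vertex_swap_def)
  have vertices: "?\<tau> ` fst (complete_bipartite A B) \<subseteq> fst (complete_bipartite A B)"
    using fixes_A assms(2,3) by (auto simp: complete_bipartite_def vertex_swap_def)
  have edges: "?\<tau> ` e \<in> snd (complete_bipartite A B)" if e: "e \<in> snd (complete_bipartite A B)" for e
  proof -
    obtain a c where "a \<in> A" "c \<in> B" "e = {a, c}"
      using e by (auto simp: complete_bipartite_def)
    moreover from this have "?\<tau> ` e = {a, ?\<tau> c}"
      using fixes_A by simp
    moreover have "?\<tau> c \<in> B"
      using \<open>c \<in> B\<close> assms(2,3) by (simp add: vertex_swap_def)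
    ultimately show ?thesis
      unfolding complete_bipartite_def by auto
  qed
  from incidence_structure_involution[where \<tau> = ?\<tau>, OF invol vertices edges]
  show "\<And>x. incidence_swap b b' (incidence_swap b b' x) = x"
    and "incidence_swap b b' ` fst S \<subseteq> fst S"
    and "\<And>x y. (x, y) \<in> snd S \<Longrightarrow> (incidence_swap b b' x, incidence_swap b b' y) \<in> snd S"
    unfolding incidence_swap_def S_def by blast+
qed

lemma incidence_swap_nodes:
  assumes "A \<inter> B = {}" "b \<in> B" "b' \<in> B" and x: "x \<in> fst (incidence_structure (complete_bipartite A B))"
  shows "incidence_swap b b' x = x \<or> (\<exists>z\<in>insert None (Some ` A).
           (x = incidence_node b z \<and> incidence_swap b b' x = incidence_node b' z) \<or>
           (x = incidence_node b' z \<and> incidence_swap b b' x = incidence_node b z))"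
proof -
  have fixes_A: "vertex_swap b b' a = a" if "a \<in> A" for a
    using that assms(1-3) by (auto simp: vertex_swap_def)
  have fixes_other: "vertex_swap b b' v = v" if "v \<noteq> b" "v \<noteq> b'" for v
    using that by (simp add: vertex_swap_def)
  have swaps: "vertex_swap b b' b = b'" "vertex_swap b b' b' = b"
    by (simp_all add: vertex_swap_def)
  from x consider (vertex) v where "x = Inl v"
    | (edge) a c where "a \<in> A" "x = Inr {a, c}"
    by (auto simp: incidence_structure_def complete_bipartite_def)
  then show ?thesis
  proof cases
    case vertex
    then show ?thesis
      by (cases "v = b \<or> v = b'") (auto simp: incidence_swap_def incidence_node_def fixes_other swaps)
  next
    case edge
    then show ?thesis
      by (cases "c = b \<or> c = b'") (auto simp: incidence_swap_def incidence_node_def fixes_A fixes_other swaps)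
  qed
qed

lemma twin_vertices:
  assumes "finite A" and big: "2 ^ (k * (card A + 1)) < card B"
  obtains b b' where "b \<in> B" "b' \<in> B" "b \<noteq> b'"
    "\<And>i z. i < k \<Longrightarrow> z \<in> insert None (Some ` A) \<Longrightarrow> incidence_node b z \<in> P i \<longleftrightarrow> incidence_node b' z \<in> P i"
proof -
  define Z where "Z = insert None (Some ` A)"
  define profile where "profile b = {(i, z) \<in> {..<k} \<times> Z. incidence_node b z \<in> P i}" for b
  have "\<not> inj_on profile B"
  proof
    assume "inj_on profile B"
    moreover have "profile ` B \<subseteq> Pow ({..<k} \<times> Z)"
      by (auto simp: profile_def)
    moreover have fin: "finite ({..<k} \<times> Z)"
      using assms(1) by (simp add: Z_def)
    ultimately have "card B \<le> card (Pow ({..<k} \<times> Z))"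
      by (intro card_inj_on_le) simp_all
    also have "card (Pow ({..<k} \<times> Z)) = 2 ^ (k * (card A + 1))"
      using fin assms(1) by (simp add: Z_def card_Pow card_cartesian_product card_image)
    finally show False
      using big by simp
  qed
  then obtain b b' where "b \<in> B" "b' \<in> B" "b \<noteq> b'" "profile b = profile b'"
    unfolding inj_on_def by blast
  moreover from this(4) have "incidence_node b z \<in> P i \<longleftrightarrow> incidence_node b' z \<in> P i"
    if "i < k" "z \<in> Z" for i z
    using that unfolding profile_def set_eq_iff by blast
  ultimately show thesis
    using that unfolding Z_def by blast
qed

lemma complete_bipartite_definable_order_bound:
  assumes order: "linear_order_on (fst S) {(a, b). a \<in> fst S \<and> b \<in> fst S \<and> sat S (asg2 a b) P \<phi>}"
    and params: "fsv \<phi> \<subseteq> {..<k}" "\<forall>i<k. P i \<subseteq> fst S"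
    and S: "S = incidence_structure (complete_bipartite A B)" and AB: "A \<inter> B = {}" "finite A"
  shows "card B \<le> 2 ^ (k * (card A + 1))"
proof (rule ccontr)
  assume "\<not> card B \<le> 2 ^ (k * (card A + 1))"
  then obtain b b' where b: "b \<in> B" "b' \<in> B" "b \<noteq> b'" and twins:
    "\<And>i z. i < k \<Longrightarrow> z \<in> insert None (Some ` A) \<Longrightarrow> incidence_node b z \<in> P i \<longleftrightarrow> incidence_node b' z \<in> P i"
    using twin_vertices[OF AB(2)] by (metis not_le)
  let ?\<sigma> = "incidence_swap b b'"
  note automorphism = incidence_swap_automorphism[OF AB(1) b(1,2), folded S]
  have fixes_params: "?\<sigma> ` P i \<subseteq> P i" if "i < k" for i
  proof
    fix y assume "y \<in> ?\<sigma> ` P i"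
    then obtain x where x: "x \<in> P i" "y = ?\<sigma> x" by blast
    then have "x \<in> fst S" using params(2) that by blast
    then show "y \<in> P i"
      using incidence_swap_nodes[OF AB(1) b(1,2), folded S, of x] twins[OF that] x by auto
  qed
  have "Inl b \<in> fst S"
    using b(1) by (simp add: S incidence_structure_def complete_bipartite_def)
  then have "?\<sigma> (Inl b) = Inl b"
    by (intro definable_order_fixed_by_involution[of S P \<phi> k ?\<sigma>] order params(1) automorphism fixes_params)
  then show False
    using b by (simp add: incidence_swap_def vertex_swap_def)
qed

lemma mso_order_complete_bipartite_bound:
  assumes order: "mso_defines_order \<phi> k (incidence_structure ` C)"
    and "G \<in> C" and "is_K G n m"
  shows "m \<le> 2 ^ (k * (n + 1))"
proof -
  obtain A B where AB: "A \<inter> B = {}" "finite A" "finite B" "card A = n" "card B = m"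
    and G: "G = complete_bipartite A B"
    using \<open>is_K G n m\<close> by (rule is_KE)
  define S where "S = incidence_structure (complete_bipartite A B)"
  show ?thesis
  proof (cases "B = {}")
    case False
    then have "fst S \<noteq> {}"
      by (simp add: S_def incidence_structure_def complete_bipartite_def)
    moreover have "S \<in> incidence_structure ` C"
      using \<open>G \<in> C\<close> unfolding S_def G by (rule imageI)
    ultimately obtain P where "\<forall>i<k. P i \<subseteq> fst S" "fsv \<phi> \<subseteq> {..<k}"
      "linear_order_on (fst S) {(a, b). a \<in> fst S \<and> b \<in> fst S \<and> sat S (asg2 a b) P \<phi>}"
      using order unfolding mso_defines_order_def by blast
    then show ?thesis
      using complete_bipartite_definable_order_bound[OF _ _ _ S_def AB(1,2)] AB(4,5) by blast
  qed (use AB in simp)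
qed

section \<open>An order formula for complete bipartite graphs with a small side\<close>

definition FalseF :: mso where "FalseF = ExI 0 (Neg (Eq 0 0))"
definition Disj :: "mso \<Rightarrow> mso \<Rightarrow> mso" where "Disj f g = Neg (Conj (Neg f) (Neg g))"
definition Impl :: "mso \<Rightarrow> mso \<Rightarrow> mso" where "Impl f g = Disj (Neg f) g"
definition Equiv :: "mso \<Rightarrow> mso \<Rightarrow> mso" where "Equiv f g = Conj (Impl f g) (Impl g f)"
definition AllI :: "nat \<Rightarrow> mso \<Rightarrow> mso" where "AllI i f = Neg (ExI i (Neg f))"
definition Disjs :: "mso list \<Rightarrow> mso" where "Disjs fs = foldr Disj fs FalseF"
definition Conjs :: "mso list \<Rightarrow> mso" where "Conjs fs = Neg (Disjs (map Neg fs))"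

lemma sat_derived [simp]:
  "\<not> sat S \<alpha> \<beta> FalseF"
  "sat S \<alpha> \<beta> (Disj f g) \<longleftrightarrow> sat S \<alpha> \<beta> f \<or> sat S \<alpha> \<beta> g"
  "sat S \<alpha> \<beta> (Impl f g) \<longleftrightarrow> (sat S \<alpha> \<beta> f \<longrightarrow> sat S \<alpha> \<beta> g)"
  "sat S \<alpha> \<beta> (Equiv f g) \<longleftrightarrow> (sat S \<alpha> \<beta> f \<longleftrightarrow> sat S \<alpha> \<beta> g)"
  "sat S \<alpha> \<beta> (AllI i f) \<longleftrightarrow> (\<forall>a\<in>fst S. sat S (\<alpha>(i := a)) \<beta> f)"
  by (auto simp: FalseF_def Disj_def Impl_def Equiv_def AllI_def)

lemma sat_Disjs [simp]: "sat S \<alpha> \<beta> (Disjs fs) \<longleftrightarrow> (\<exists>f\<in>set fs. sat S \<alpha> \<beta> f)"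
  by (induction fs) (simp_all add: Disjs_def)

lemma sat_Conjs [simp]: "sat S \<alpha> \<beta> (Conjs fs) \<longleftrightarrow> (\<forall>f\<in>set fs. sat S \<alpha> \<beta> f)"
  by (simp add: Conjs_def)

lemma fv_derived [simp]:
  "fv FalseF = {}"
  "fv (Disj f g) = fv f \<union> fv g"
  "fv (Impl f g) = fv f \<union> fv g"
  "fv (Equiv f g) = fv f \<union> fv g"
  "fv (AllI i f) = fv f - {i}"
  "fv (Disjs fs) = (\<Union>f\<in>set fs. fv f)"
  "fv (Conjs fs) = (\<Union>f\<in>set fs. fv f)"
  by (induction fs) (auto simp: FalseF_def Disj_def Impl_def Equiv_def AllI_def Disjs_def Conjs_def)

lemma fsv_derived [simp]:
  "fsv FalseF = {}"
  "fsv (Disj f g) = fsv f \<union> fsv g"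
  "fsv (Impl f g) = fsv f \<union> fsv g"
  "fsv (Equiv f g) = fsv f \<union> fsv g"
  "fsv (AllI i f) = fsv f"
  "fsv (Disjs fs) = (\<Union>f\<in>set fs. fsv f)"
  "fsv (Conjs fs) = (\<Union>f\<in>set fs. fsv f)"
  by (induction fs) (auto simp: FalseF_def Disj_def Impl_def Equiv_def AllI_def Disjs_def Conjs_def)

text \<open>Set variable \<open>0\<close> holds the smaller side \<open>A\<close>, \<open>1\<close> the larger side \<open>B\<close>, \<open>2\<close> and \<open>3\<close> the edges
  that encode the order of \<open>A\<close>, and \<open>4 + c\<close> the elements of colour \<open>c\<close>.\<close>

definition ColourLess :: "nat \<Rightarrow> nat \<Rightarrow> nat \<Rightarrow> mso" where
  "ColourLess K u v = Disjs [Conj (Mem u (4 + c)) (Mem v (4 + d)). d \<leftarrow> [0..<K], c \<leftarrow> [0..<d]]"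

definition SameColour :: "nat \<Rightarrow> nat \<Rightarrow> nat \<Rightarrow> mso" where
  "SameColour K u v = Conjs [Equiv (Mem u (4 + c)) (Mem v (4 + c)). c \<leftarrow> [0..<K]]"

lemma sat_colour_formulas:
  assumes "\<And>c. c < K \<Longrightarrow> \<alpha> u \<in> \<beta> (4 + c) \<longleftrightarrow> x = c" "\<And>c. c < K \<Longrightarrow> \<alpha> v \<in> \<beta> (4 + c) \<longleftrightarrow> y = c"
    and "x < K" "y < K"
  shows "sat S \<alpha> \<beta> (ColourLess K u v) \<longleftrightarrow> x < y"
    and "sat S \<alpha> \<beta> (SameColour K u v) \<longleftrightarrow> x = y"
  using assms by (auto simp: ColourLess_def SameColour_def)

text \<open>Variables numbered from \<open>Suc (u + v)\<close> on are fresh for the formulas below.\<close>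

definition IndexLess :: "nat \<Rightarrow> nat \<Rightarrow> mso" where
  "IndexLess u v = (let t = Suc (u + v) in
     ExI t (ExI (t + 1) (ExI (t + 2) (Conjs [Mem t 1, Mem (t + 1) 2, Rel v (t + 1), Rel t (t + 1),
                                            Mem (t + 2) 3, Rel u (t + 2), Rel t (t + 2)]))))"

definition OnEdges :: "(nat \<Rightarrow> nat \<Rightarrow> mso) \<Rightarrow> nat \<Rightarrow> nat \<Rightarrow> nat \<Rightarrow> nat \<Rightarrow> nat \<Rightarrow> mso" where
  "OnEdges C a u v e e' = ExI e (ExI e' (Conjs [Rel a e, Rel u e, Rel a e', Rel v e', C e e']))"

definition LexLessAt :: "nat \<Rightarrow> nat \<Rightarrow> nat \<Rightarrow> nat \<Rightarrow> mso" where
  "LexLessAt K t u v = Conjs [Mem t 0, OnEdges (ColourLess K) t u v (t + 2) (t + 3),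
     AllI (t + 1) (Impl (Conj (Mem (t + 1) 0) (IndexLess (t + 1) t))
                        (OnEdges (SameColour K) (t + 1) u v (t + 2) (t + 3)))]"

definition CodeLess :: "nat \<Rightarrow> nat \<Rightarrow> nat \<Rightarrow> mso" where
  "CodeLess K u v = (let t = Suc (u + v) in
     Disj (ColourLess K u v) (Conj (SameColour K u v) (ExI t (LexLessAt K t u v))))"

definition EdgeLess :: "nat \<Rightarrow> nat \<Rightarrow> nat \<Rightarrow> mso" where
  "EdgeLess K u v = (let t = Suc (u + v) in
     ExI t (ExI (t + 1) (ExI (t + 2) (ExI (t + 3) (Conjs [Mem t 0, Rel t u, Mem (t + 1) 1, Rel (t + 1) u,
        Mem (t + 2) 0, Rel (t + 2) v, Mem (t + 3) 1, Rel (t + 3) v,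
        Disj (IndexLess t (t + 2)) (Conj (Eq t (t + 2)) (CodeLess K (t + 1) (t + 3)))])))))"

definition IsEdge :: "nat \<Rightarrow> mso" where "IsEdge x = Conj (Neg (Mem x 0)) (Neg (Mem x 1))"

definition order_formula :: "nat \<Rightarrow> mso" where
  "order_formula K = Disj (Eq 0 1) (Disjs [Conjs [Mem 0 0, Mem 1 0, IndexLess 0 1], Conj (Mem 0 0) (Neg (Mem 1 0)),
      Conjs [Mem 0 1, Mem 1 1, CodeLess K 0 1], Conj (Mem 0 1) (IsEdge 1),
      Conjs [IsEdge 0, IsEdge 1, EdgeLess K 0 1]])"

lemma free_vars_colour_formulas:
  "fv (ColourLess K u v) \<subseteq> {u, v}" "fv (SameColour K u v) \<subseteq> {u, v}"
  "fsv (ColourLess K u v) \<subseteq> {..<4 + K}" "fsv (SameColour K u v) \<subseteq> {..<4 + K}"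
  by (auto simp: ColourLess_def SameColour_def)

lemma free_vars_IndexLess: "fv (IndexLess u v) \<subseteq> {u, v}" "fsv (IndexLess u v) \<subseteq> {..<4}"
  by (auto simp: IndexLess_def Let_def)

lemma free_vars_CodeLess: "fv (CodeLess K u v) \<subseteq> {u, v}" "fsv (CodeLess K u v) \<subseteq> {..<4 + K}"
proof -
  let ?t = "Suc (u + v)"
  note colour = free_vars_colour_formulas[of K u v] free_vars_colour_formulas[of K "?t + 2" "?t + 3"]
  show "fv (CodeLess K u v) \<subseteq> {u, v}" "fsv (CodeLess K u v) \<subseteq> {..<4 + K}"
    using colour free_vars_IndexLess[of "?t + 1" ?t] by (auto simp: CodeLess_def LexLessAt_def OnEdges_def Let_def)
qed

lemma free_vars_EdgeLess: "fv (EdgeLess K u v) \<subseteq> {u, v}" "fsv (EdgeLess K u v) \<subseteq> {..<4 + K}"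
  using free_vars_IndexLess[of "Suc (u + v)" "Suc (u + v) + 2"]
    free_vars_CodeLess[of K "Suc (u + v) + 1" "Suc (u + v) + 3"]
  by (auto simp: EdgeLess_def Let_def)

lemma free_vars_order_formula: "fv (order_formula K) \<subseteq> {0, 1}" "fsv (order_formula K) \<subseteq> {..<4 + K}"
  using free_vars_IndexLess[of 0 1] free_vars_CodeLess[of K 0 1] free_vars_EdgeLess[of K 0 1]
  by (auto simp: order_formula_def IsEdge_def)

lemma list_less_same_length_iff:
  fixes xs ys :: "'a::linorder list"
  assumes "length xs = length ys"
  shows "xs < ys \<longleftrightarrow> (\<exists>i<length xs. xs ! i < ys ! i \<and> (\<forall>j<i. xs ! j = ys ! j))"
proof -
  have "take i xs = take i ys \<longleftrightarrow> (\<forall>j<i. xs ! j = ys ! j)" if "i < length xs" for i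
    using that assms by (simp add: list_eq_iff_nth_eq)
  then show ?thesis
    unfolding list_less_def lexord_take_index_conv using assms by auto
qed

lemma list_less_length_Suc_iff:
  fixes xs ys :: "'a::linorder list"
  assumes "length xs = Suc n" "length ys = Suc n"
  shows "xs < ys \<longleftrightarrow> xs ! 0 < ys ! 0 \<or> (xs ! 0 = ys ! 0 \<and>
      (\<exists>i<n. xs ! Suc i < ys ! Suc i \<and> (\<forall>j<i. xs ! Suc j = ys ! Suc j)))"
proof -
  have "xs < ys \<longleftrightarrow> (\<exists>i<Suc n. xs ! i < ys ! i \<and> (\<forall>j<i. xs ! j = ys ! j))"
    using list_less_same_length_iff[of xs ys] assms by simp
  also have "\<dots> \<longleftrightarrow> xs ! 0 < ys ! 0 \<or> (\<exists>i<n. xs ! Suc i < ys ! Suc i \<and> (\<forall>j<Suc i. xs ! j = ys ! j))"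
    unfolding Ex_less_Suc2 by simp
  also have "\<dots> \<longleftrightarrow> xs ! 0 < ys ! 0 \<or> (xs ! 0 = ys ! 0 \<and>
      (\<exists>i<n. xs ! Suc i < ys ! Suc i \<and> (\<forall>j<i. xs ! Suc j = ys ! Suc j)))"
    unfolding All_less_Suc2 by auto
  finally show ?thesis .
qed

text \<open>Digit \<open>0\<close> of \<open>code b\<close> colours the vertex \<open>b\<close> and digit \<open>i + 1\<close> colours the edge \<open>{f i, b}\<close>.\<close>

locale coded_complete_bipartite =
  fixes A B :: "'v set" and f :: "nat \<Rightarrow> 'v" and n :: nat and \<mu> :: "'v \<Rightarrow> 'v"
    and code :: "'v \<Rightarrow> nat list" and K :: nat
  assumes disjoint: "A \<inter> B = {}"
    and enum: "bij_betw f {..<n} A"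
    and \<mu>_inj: "inj_on \<mu> A" and \<mu>_into: "\<mu> ` A \<subseteq> B"
    and code_inj: "inj_on code B"
    and code_length: "\<And>b. b \<in> B \<Longrightarrow> length (code b) = Suc n"
    and code_digits: "\<And>b. b \<in> B \<Longrightarrow> set (code b) \<subseteq> {..<K}"
begin

definition E :: "'v set set" where "E = {{a, b} | a b. a \<in> A \<and> b \<in> B}"
definition U :: "('v + 'v set) set" where "U = fst (incidence_structure (A \<union> B, E))"
definition R :: "('v + 'v set) rel" where "R = snd (incidence_structure (A \<union> B, E))"

text \<open>\<open>f i\<close> precedes \<open>f j\<close> iff some vertex of \<open>B\<close> (necessarily \<open>\<mu> (f j)\<close>) is joined to \<open>f j\<close> by an
  edge in \<open>Matched\<close> and to \<open>f i\<close> by an edge in \<open>Above\<close>.\<close>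

definition Matched :: "('v + 'v set) set" where "Matched = {Inr {f i, \<mu> (f i)} | i. i < n}"
definition Above :: "('v + 'v set) set" where "Above = {Inr {f i, \<mu> (f j)} | i j. i < j \<and> j < n}"
definition Colour :: "nat \<Rightarrow> ('v + 'v set) set" where
  "Colour c = {Inl b | b. b \<in> B \<and> code b ! 0 = c} \<union> {Inr {f i, b} | i b. i < n \<and> b \<in> B \<and> code b ! Suc i = c}"

definition param :: "nat \<Rightarrow> ('v + 'v set) set" where
  "param j = (if j = 0 then Inl ` A else if j = 1 then Inl ` B else if j = 2 then Matched
              else if j = 3 then Above else Colour (j - 4))"

lemma param_simps [simp]:
  "param 0 = Inl ` A" "param 1 = Inl ` B" "param (Suc 0) = Inl ` B" "param 2 = Matched" "param 3 = Above"
  "param (4 + c) = Colour c"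
  by (simp_all add: param_def)

lemma f_in_A [simp]: "i < n \<Longrightarrow> f i \<in> A"
  using enum by (auto simp: bij_betw_def)

lemma f_eq_iff [simp]: "i < n \<Longrightarrow> j < n \<Longrightarrow> f i = f j \<longleftrightarrow> i = j"
  using enum by (auto simp: bij_betw_def inj_on_def)

lemma A_cases:
  assumes "a \<in> A"
  obtains i where "i < n" "a = f i"
  using assms enum by (auto simp: bij_betw_def)

lemma \<mu>_in_B [simp]: "a \<in> A \<Longrightarrow> \<mu> a \<in> B"
  using \<mu>_into by auto

lemma \<mu>_eq_iff [simp]: "a \<in> A \<Longrightarrow> a' \<in> A \<Longrightarrow> \<mu> a = \<mu> a' \<longleftrightarrow> a = a'"
  using \<mu>_inj by (auto simp: inj_on_def)

lemma A_not_B: "a \<in> A \<Longrightarrow> a \<notin> B"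
  using disjoint by auto

lemma f_not_B [simp]: "i < n \<Longrightarrow> f i \<notin> B"
  using A_not_B by simp

lemma edge_eq_iff:
  "a \<in> A \<Longrightarrow> b \<in> B \<Longrightarrow> a' \<in> A \<Longrightarrow> b' \<in> B \<Longrightarrow> {a, b} = {a', b'} \<longleftrightarrow> a = a' \<and> b = b'"
  using disjoint by (auto simp: doubleton_eq_iff)

lemma R_iff: "(x, y) \<in> R \<longleftrightarrow> (\<exists>v e. x = Inl v \<and> y = Inr e \<and> v \<in> A \<union> B \<and> e \<in> E \<and> v \<in> e)"
  by (auto simp: R_def incidence_structure_def)

lemma edge_in_E [simp]: "a \<in> A \<Longrightarrow> b \<in> B \<Longrightarrow> {a, b} \<in> E"
  by (auto simp: E_def)

lemma R_Inl_Inr: "i < n \<Longrightarrow> b \<in> B \<Longrightarrow> (Inl x, Inr {f i, b}) \<in> R \<longleftrightarrow> x = f i \<or> x = b"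
  by (auto simp: R_iff)

lemma U_cases:
  assumes "x \<in> U"
  obtains (A) i where "i < n" "x = Inl (f i)"
    | (B) b where "b \<in> B" "x = Inl b"
    | (E) i b where "i < n" "b \<in> B" "x = Inr {f i, b}"
proof -
  from assms consider (vertex) v where "v \<in> A \<union> B" "x = Inl v"
    | (edge) a b where "a \<in> A" "b \<in> B" "x = Inr {a, b}"
    by (auto simp: U_def E_def incidence_structure_def)
  then show thesis
  proof cases
    case vertex
    show thesis
    proof (cases "v \<in> A")
      case True
      then obtain i where "i < n" "v = f i" by (rule A_cases)
      with vertex show thesis by (intro A) simp_all
    next
      case False
      with vertex show thesis by (intro B) simp_all
    qed
  next
    case edge
    then obtain i where "i < n" "a = f i" by (auto elim: A_cases)
    with edge show thesis by (intro E) simp_all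
  qed
qed

lemma U_intros:
  "i < n \<Longrightarrow> Inl (f i) \<in> U" "b \<in> B \<Longrightarrow> Inl b \<in> U" "i < n \<Longrightarrow> b \<in> B \<Longrightarrow> Inr {f i, b} \<in> U"
  by (simp_all add: U_def incidence_structure_def)

lemma common_edge:
  assumes "(Inl (f i), x) \<in> R" "(Inl b, x) \<in> R" "i < n" "b \<in> B"
  shows "x = Inr {f i, b}"
proof -
  obtain e where x: "x = Inr e" "e \<in> E" "f i \<in> e" "b \<in> e"
    using assms(1,2) by (auto simp: R_iff)
  then obtain a c where "e = {a, c}" "a \<in> A" "c \<in> B"
    by (auto simp: E_def)
  then show ?thesis
    using x assms(3,4) A_not_B by auto
qed

lemma Colour_Inl: "Inl b \<in> Colour c \<longleftrightarrow> b \<in> B \<and> code b ! 0 = c"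
  by (auto simp: Colour_def)

lemma Colour_Inr: "i < n \<Longrightarrow> b \<in> B \<Longrightarrow> Inr {f i, b} \<in> Colour c \<longleftrightarrow> code b ! Suc i = c"
  by (auto simp: Colour_def edge_eq_iff)

lemma code_less_K: "b \<in> B \<Longrightarrow> j \<le> n \<Longrightarrow> code b ! j < K"
  using code_length code_digits by (metis le_imp_less_Suc lessThan_iff nth_mem subsetD)

lemma code_eq_iff: "b \<in> B \<Longrightarrow> b' \<in> B \<Longrightarrow> code b = code b' \<longleftrightarrow> b = b'"
  using code_inj by (auto simp: inj_on_def)


lemma sat_IndexLess:
  assumes "\<alpha> u = Inl (f i)" "\<alpha> v = Inl (f j)" "i < n" "j < n"
  shows "sat (U, R) \<alpha> param (IndexLess u v) \<longleftrightarrow> i < j"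
proof -
  have "sat (U, R) \<alpha> param (IndexLess u v) \<longleftrightarrow>
      (\<exists>x\<in>U. \<exists>y\<in>U. \<exists>z\<in>U. x \<in> Inl ` B \<and> y \<in> Matched \<and> (Inl (f j), y) \<in> R \<and> (x, y) \<in> R \<and>
         z \<in> Above \<and> (Inl (f i), z) \<in> R \<and> (x, z) \<in> R)"
    using assms by (simp add: IndexLess_def Let_def)
  also have "\<dots> \<longleftrightarrow> i < j"
  proof
    assume "\<exists>x\<in>U. \<exists>y\<in>U. \<exists>z\<in>U. x \<in> Inl ` B \<and> y \<in> Matched \<and> (Inl (f j), y) \<in> R \<and> (x, y) \<in> R \<and>
         z \<in> Above \<and> (Inl (f i), z) \<in> R \<and> (x, z) \<in> R"
    then obtain b y z where b: "b \<in> B" and y: "y \<in> Matched" "(Inl (f j), y) \<in> R" "(Inl b, y) \<in> R"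
      and z: "z \<in> Above" "(Inl (f i), z) \<in> R" "(Inl b, z) \<in> R"
      by blast
    have "y = Inr {f j, b}" "z = Inr {f i, b}"
      using common_edge y z b assms(3,4) by blast+
    then have "b = \<mu> (f j)" and "z \<in> Above"
      using y(1) z(1) assms(4) b by (auto simp: Matched_def edge_eq_iff)
    then obtain i' j' where "{f i, \<mu> (f j)} = {f i', \<mu> (f j')}" "i' < j'" "j' < n"
      using \<open>z = Inr {f i, b}\<close> by (auto simp: Above_def)
    then show "i < j"
      using assms(3,4) by (auto simp: edge_eq_iff)
  next
    assume "i < j"
    then show "\<exists>x\<in>U. \<exists>y\<in>U. \<exists>z\<in>U. x \<in> Inl ` B \<and> y \<in> Matched \<and> (Inl (f j), y) \<in> R \<and> (x, y) \<in> R \<and>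
         z \<in> Above \<and> (Inl (f i), z) \<in> R \<and> (x, z) \<in> R"
      using assms(3,4) U_intros R_Inl_Inr
      by (intro bexI[of _ "Inl (\<mu> (f j))"] bexI[of _ "Inr {f j, \<mu> (f j)}"] bexI[of _ "Inr {f i, \<mu> (f j)}"])
        (auto simp: Matched_def Above_def)
  qed
  finally show ?thesis .
qed

lemma sat_OnEdges:
  assumes "\<alpha> a = Inl (f i)" "\<alpha> u = Inl b" "\<alpha> v = Inl b'" "i < n" "b \<in> B" "b' \<in> B"
    and "e \<notin> {a, u, v}" "e' \<notin> {a, u, v}" "e \<noteq> e'"
    and C: "\<And>\<alpha>'. \<alpha>' e = Inr {f i, b} \<Longrightarrow> \<alpha>' e' = Inr {f i, b'} \<Longrightarrow> sat (U, R) \<alpha>' param (C e e') \<longleftrightarrow> Q"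
  shows "sat (U, R) \<alpha> param (OnEdges C a u v e e') \<longleftrightarrow> Q"
proof -
  have "sat (U, R) \<alpha> param (OnEdges C a u v e e') \<longleftrightarrow>
     (\<exists>x\<in>U. \<exists>y\<in>U. (Inl (f i), x) \<in> R \<and> (Inl b, x) \<in> R \<and> (Inl (f i), y) \<in> R \<and> (Inl b', y) \<in> R \<and>
        sat (U, R) (\<alpha>(e := x, e' := y)) param (C e e'))"
    using assms(1-3,7-9) by (simp add: OnEdges_def)
  also have "\<dots> \<longleftrightarrow> sat (U, R) (\<alpha>(e := Inr {f i, b}, e' := Inr {f i, b'})) param (C e e')"
    using common_edge[OF _ _ assms(4,5)] common_edge[OF _ _ assms(4,6)] U_intros assms(4-6) R_Inl_Inr
    by (smt (verit))
  also have "\<dots> \<longleftrightarrow> Q"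
    using C assms(9) by simp
  finally show ?thesis .
qed

lemma sat_colour_formulas_Inl:
  assumes "\<alpha> u = Inl b" "\<alpha> v = Inl b'" "b \<in> B" "b' \<in> B"
  shows "sat (U, R) \<alpha> param (ColourLess K u v) \<longleftrightarrow> code b ! 0 < code b' ! 0"
    and "sat (U, R) \<alpha> param (SameColour K u v) \<longleftrightarrow> code b ! 0 = code b' ! 0"
  using assms by (intro sat_colour_formulas; simp add: Colour_Inl code_less_K)+

lemma sat_colour_formulas_Inr:
  assumes "\<alpha> e = Inr {f i, b}" "\<alpha> e' = Inr {f i, b'}" "i < n" "b \<in> B" "b' \<in> B"
  shows "sat (U, R) \<alpha> param (ColourLess K e e') \<longleftrightarrow> code b ! Suc i < code b' ! Suc i"
    and "sat (U, R) \<alpha> param (SameColour K e e') \<longleftrightarrow> code b ! Suc i = code b' ! Suc i"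
  using assms by (intro sat_colour_formulas; simp add: Colour_Inr code_less_K)+

lemma sat_LexLessAt:
  assumes t: "\<alpha> t = Inl (f i)" and u: "\<alpha> u = Inl b" and v: "\<alpha> v = Inl b'"
    and i: "i < n" and b: "b \<in> B" and b': "b' \<in> B" and fresh: "u < t" "v < t"
  shows "sat (U, R) \<alpha> param (LexLessAt K t u v) \<longleftrightarrow>
    code b ! Suc i < code b' ! Suc i \<and> (\<forall>j<i. code b ! Suc j = code b' ! Suc j)"
proof -
  have less: "sat (U, R) \<alpha> param (OnEdges (ColourLess K) t u v (t + 2) (t + 3))
      \<longleftrightarrow> code b ! Suc i < code b' ! Suc i"
    by (rule sat_OnEdges[where i = i and b = b and b' = b'])
      (use t u v i b b' fresh sat_colour_formulas_Inr in auto)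
  have below: "sat (U, R) (\<alpha>(t + 1 := x)) param
      (Impl (Conj (Mem (t + 1) 0) (IndexLess (t + 1) t)) (OnEdges (SameColour K) (t + 1) u v (t + 2) (t + 3)))
     \<longleftrightarrow> (\<forall>j<n. x = Inl (f j) \<longrightarrow> j < i \<longrightarrow> code b ! Suc j = code b' ! Suc j)" for x
  proof (cases "x \<in> Inl ` A")
    case True
    then obtain j where j: "j < n" "x = Inl (f j)"
      by (auto elim: A_cases)
    have "sat (U, R) (\<alpha>(t + 1 := x)) param (IndexLess (t + 1) t) \<longleftrightarrow> j < i"
      by (rule sat_IndexLess) (use t i j in auto)
    moreover have "sat (U, R) (\<alpha>(t + 1 := x)) param
        (OnEdges (SameColour K) (t + 1) u v (t + 2) (t + 3)) \<longleftrightarrow> code b ! Suc j = code b' ! Suc j"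
      by (rule sat_OnEdges[where i = j and b = b and b' = b'])
        (use j u v b b' fresh sat_colour_formulas_Inr in auto)
    ultimately show ?thesis
      using j True by auto
  qed auto
  have "(\<forall>x\<in>U. \<forall>j<n. x = Inl (f j) \<longrightarrow> j < i \<longrightarrow> code b ! Suc j = code b' ! Suc j) \<longleftrightarrow>
      (\<forall>j<n. j < i \<longrightarrow> code b ! Suc j = code b' ! Suc j)"
    using U_intros(1) by auto
  also have "\<dots> \<longleftrightarrow> (\<forall>j<i. code b ! Suc j = code b' ! Suc j)"
    using i by auto
  finally show ?thesis
    using less below t i by (simp add: LexLessAt_def)
qed

lemma sat_CodeLess:
  assumes u: "\<alpha> u = Inl b" and v: "\<alpha> v = Inl b'" and b: "b \<in> B" and b': "b' \<in> B"
  shows "sat (U, R) \<alpha> param (CodeLess K u v) \<longleftrightarrow> code b < code b'"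
proof -
  let ?t = "Suc (u + v)"
  let ?differ_at = "\<lambda>i. code b ! Suc i < code b' ! Suc i \<and> (\<forall>j<i. code b ! Suc j = code b' ! Suc j)"
  have differ: "sat (U, R) (\<alpha>(?t := Inl (f i))) param (LexLessAt K ?t u v) \<longleftrightarrow> ?differ_at i"
    if "i < n" for i
    using that u v b b' by (intro sat_LexLessAt) auto
  have "(\<exists>x\<in>U. sat (U, R) (\<alpha>(?t := x)) param (LexLessAt K ?t u v)) \<longleftrightarrow> (\<exists>i<n. ?differ_at i)"
  proof
    assume "\<exists>x\<in>U. sat (U, R) (\<alpha>(?t := x)) param (LexLessAt K ?t u v)"
    then obtain x where x: "sat (U, R) (\<alpha>(?t := x)) param (LexLessAt K ?t u v)"
      by blast
    then have "x \<in> Inl ` A"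
      by (simp add: LexLessAt_def)
    then obtain i where "i < n" "x = Inl (f i)"
      by (auto elim: A_cases)
    then show "\<exists>i<n. ?differ_at i"
      using differ x by blast
  qed (use differ U_intros(1) in blast)
  then have "sat (U, R) \<alpha> param (CodeLess K u v) \<longleftrightarrow> code b ! 0 < code b' ! 0 \<or>
      (code b ! 0 = code b' ! 0 \<and> (\<exists>i<n. ?differ_at i))"
    using sat_colour_formulas_Inl[OF u v b b'] by (simp add: CodeLess_def Let_def)
  also have "\<dots> \<longleftrightarrow> code b < code b'"
    using list_less_length_Suc_iff[of "code b" n "code b'"] code_length b b' by simp
  finally show ?thesis .
qed

lemma sat_EdgeLess:
  assumes u: "\<alpha> u = Inr {f i, b}" and v: "\<alpha> v = Inr {f j, b'}" and ij: "i < n" "j < n"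
    and b: "b \<in> B" and b': "b' \<in> B"
  shows "sat (U, R) \<alpha> param (EdgeLess K u v) \<longleftrightarrow> i < j \<or> (i = j \<and> code b < code b')"
proof -
  let ?t = "Suc (u + v)"
  let ?Body = "Conjs [Mem ?t 0, Rel ?t u, Mem (?t + 1) 1, Rel (?t + 1) u,
        Mem (?t + 2) 0, Rel (?t + 2) v, Mem (?t + 3) 1, Rel (?t + 3) v,
        Disj (IndexLess ?t (?t + 2)) (Conj (Eq ?t (?t + 2)) (CodeLess K (?t + 1) (?t + 3)))]"
  have endpoints: "x \<in> Inl ` A \<and> (x, Inr {f k, c}) \<in> R \<and> Z \<longleftrightarrow> x = Inl (f k) \<and> Z"
    "y \<in> Inl ` B \<and> (y, Inr {f k, c}) \<in> R \<and> Z \<longleftrightarrow> y = Inl c \<and> Z" if "k < n" "c \<in> B" for x y k c Z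
    using that R_Inl_Inr A_not_B by auto
  have body: "sat (U, R) (\<alpha>(?t := x, ?t + 1 := y, ?t + 2 := x', ?t + 3 := y')) param ?Body \<longleftrightarrow>
     x = Inl (f i) \<and> y = Inl b \<and> x' = Inl (f j) \<and> y' = Inl b' \<and> (i < j \<or> (i = j \<and> code b < code b'))"
    for x y x' y'
  proof -
    define \<alpha>' where "\<alpha>' = \<alpha>(?t := x, ?t + 1 := y, ?t + 2 := x', ?t + 3 := y')"
    have \<alpha>': "\<alpha>' ?t = x" "\<alpha>' (?t + 1) = y" "\<alpha>' (?t + 2) = x'" "\<alpha>' (?t + 3) = y'"
      "\<alpha>' u = Inr {f i, b}" "\<alpha>' v = Inr {f j, b'}"
      using u v by (simp_all add: \<alpha>'_def)
    have "sat (U, R) \<alpha>' param ?Body \<longleftrightarrow> x = Inl (f i) \<and> y = Inl b \<and> x' = Inl (f j) \<and> y' = Inl b' \<and>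
       (sat (U, R) \<alpha>' param (IndexLess ?t (?t + 2)) \<or> (x = x' \<and> sat (U, R) \<alpha>' param (CodeLess K (?t + 1) (?t + 3))))"
      using ij b b' by (simp add: \<alpha>'[simplified] endpoints)
    also have "\<dots> \<longleftrightarrow> x = Inl (f i) \<and> y = Inl b \<and> x' = Inl (f j) \<and> y' = Inl b' \<and> (i < j \<or> (i = j \<and> code b < code b'))"
      using sat_IndexLess[of \<alpha>' ?t i "?t + 2" j] sat_CodeLess[of \<alpha>' "?t + 1" b "?t + 3" b'] \<alpha>' ij b b'
      by auto
    finally show ?thesis unfolding \<alpha>'_def .
  qed
  show ?thesis
    unfolding EdgeLess_def Let_def sat.simps fst_conv body using U_intros ij b b' by blast
qed

definition rank :: "'v + 'v set \<Rightarrow> nat \<times> nat \<times> nat list" where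
  "rank x = (case x of
     Inl v \<Rightarrow> if v \<in> A then (0, the_inv_into {..<n} f v, []) else (1, 0, code v)
   | Inr e \<Rightarrow> (2, THE i. i < n \<and> f i \<in> e, code (THE b. b \<in> B \<and> b \<in> e)))"

lemma rank_simps:
  "i < n \<Longrightarrow> rank (Inl (f i)) = (0, i, [])"
  "b \<in> B \<Longrightarrow> rank (Inl b) = (1, 0, code b)"
  "i < n \<Longrightarrow> b \<in> B \<Longrightarrow> rank (Inr {f i, b}) = (2, i, code b)"
proof -
  show "i < n \<Longrightarrow> rank (Inl (f i)) = (0, i, [])"
    using enum by (simp add: rank_def bij_betw_def the_inv_into_f_f)
  show "b \<in> B \<Longrightarrow> rank (Inl b) = (1, 0, code b)"
    using A_not_B by (auto simp: rank_def)
  assume i: "i < n" and b: "b \<in> B"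
  have "(THE i'. i' < n \<and> f i' \<in> {f i, b}) = i"
    using i b by (intro the_equality) auto
  moreover have "(THE b'. b' \<in> B \<and> b' \<in> {f i, b}) = b"
    using i b by (intro the_equality) auto
  ultimately show "rank (Inr {f i, b}) = (2, i, code b)"
    by (simp add: rank_def)
qed

lemma inj_on_rank: "inj_on rank U"
proof
  fix x y assume "x \<in> U" "y \<in> U" "rank x = rank y"
  then show "x = y"
    by (cases rule: U_cases[OF \<open>x \<in> U\<close>]; cases rule: U_cases[OF \<open>y \<in> U\<close>])
      (auto simp: rank_simps code_eq_iff)
qed

lemma sat_order_formula_iff:
  "sat (U, R) (asg2 x y) param (order_formula K) \<longleftrightarrow> x = y \<or>
     (x \<in> Inl ` A \<and> y \<in> Inl ` A \<and> sat (U, R) (asg2 x y) param (IndexLess 0 1)) \<or>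
     (x \<in> Inl ` A \<and> y \<notin> Inl ` A) \<or>
     (x \<in> Inl ` B \<and> y \<in> Inl ` B \<and> sat (U, R) (asg2 x y) param (CodeLess K 0 1)) \<or>
     (x \<in> Inl ` B \<and> y \<notin> Inl ` A \<and> y \<notin> Inl ` B) \<or>
     (x \<notin> Inl ` A \<and> x \<notin> Inl ` B \<and> y \<notin> Inl ` A \<and> y \<notin> Inl ` B \<and> sat (U, R) (asg2 x y) param (EdgeLess K 0 1))"
  by (simp add: order_formula_def IsEdge_def asg2_def)

lemma sat_order_formula:
  assumes x: "x \<in> U" and y: "y \<in> U"
  shows "sat (U, R) (asg2 x y) param (order_formula K) \<longleftrightarrow> rank x \<le> rank y"
proof -
  note simps = sat_order_formula_iff rank_simps A_not_B image_iff
  show ?thesis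
    using x
  proof (cases rule: U_cases)
    case xA: (A i)
    show ?thesis
      using y
    proof (cases rule: U_cases)
      case (A j)
      have "sat (U, R) (asg2 x y) param (IndexLess 0 1) \<longleftrightarrow> i < j"
        using xA A by (intro sat_IndexLess) (simp_all add: asg2_def)
      then show ?thesis
        using xA A by (auto simp: simps)
    qed (use xA in \<open>auto simp: simps\<close>)
  next
    case xB: (B b)
    show ?thesis
      using y
    proof (cases rule: U_cases)
      case (B b')
      have "sat (U, R) (asg2 x y) param (CodeLess K 0 1) \<longleftrightarrow> code b < code b'"
        using xB B by (intro sat_CodeLess) (simp_all add: asg2_def)
      then show ?thesis
        using xB B code_eq_iff[of b b'] by (auto simp: simps list_le_def)
    qed (use xB in \<open>auto simp: simps\<close>)
  next
    case xE: (E i b)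
    show ?thesis
      using y
    proof (cases rule: U_cases)
      case (E j b')
      have "sat (U, R) (asg2 x y) param (EdgeLess K 0 1) \<longleftrightarrow> i < j \<or> (i = j \<and> code b < code b')"
        using xE E by (intro sat_EdgeLess) (simp_all add: asg2_def)
      then show ?thesis
        using xE E code_eq_iff[of b b'] edge_eq_iff[of "f i" b "f j" b']
        by (auto simp: simps list_le_def)
    qed (use xE in \<open>auto simp: simps\<close>)
  qed
qed

lemma param_subset_U: "param j \<subseteq> U"
  by (auto simp: param_def U_def incidence_structure_def Matched_def Above_def Colour_def)

lemma order_formula_linear:
  "linear_order_on U {(x, y). x \<in> U \<and> y \<in> U \<and> sat (U, R) (asg2 x y) param (order_formula K)}"
proof -
  have "{(x, y). x \<in> U \<and> y \<in> U \<and> sat (U, R) (asg2 x y) param (order_formula K)} =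
        {(x, y). x \<in> U \<and> y \<in> U \<and> rank x \<le> rank y}"
    using sat_order_formula by blast
  moreover have "linear_order_on U {(x, y). x \<in> U \<and> y \<in> U \<and> rank x \<le> rank y}"
    using inj_on_rank
    unfolding linear_order_on_def partial_order_on_def preorder_on_def refl_on_def trans_def
      antisym_def total_on_def inj_on_def
    by auto
  ultimately show ?thesis
    by simp
qed

end


lemma is_K_bounded_sides:
  assumes "finite_complete_bipartite G"
    and bound: "\<forall>n m. is_K G n m \<and> n \<le> m \<longrightarrow> m \<le> 2 ^ (s * (n + 1))"
  obtains A B where "A \<inter> B = {}" "finite A" "finite B" "card A \<le> card B"
    "card B \<le> 2 ^ (s * (card A + 1))" "G = complete_bipartite A B"
proof -
  obtain n m where K: "is_K G n m"
    using assms(1) unfolding finite_complete_bipartite_def by blast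
  have "\<exists>n m. is_K G n m \<and> n \<le> m"
  proof (cases "n \<le> m")
    case False
    then show ?thesis
      using is_K_sym[OF K] by (intro exI[of _ m] exI[of _ n]) simp
  qed (use K in blast)
  then obtain n m where K': "is_K G n m" "n \<le> m"
    by blast
  with bound have "m \<le> 2 ^ (s * (n + 1))"
    by blast
  moreover obtain A B where "A \<inter> B = {}" "finite A" "finite B" "card A = n" "card B = m"
    "G = complete_bipartite A B"
    using K'(1) by (rule is_KE)
  ultimately show thesis
    using K'(2) by (intro that[of A B]) simp_all
qed

lemma coded_complete_bipartite_exists:
  assumes "A \<inter> B = {}" "finite A" "finite B" "card A \<le> card B" "card B \<le> 2 ^ (s * (card A + 1))"
  shows "\<exists>f \<mu> code. coded_complete_bipartite A B f (card A) \<mu> code (2 ^ s)"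
proof -
  obtain f where f: "bij_betw f {..<card A} A"
    using ex_bij_betw_nat_finite[OF assms(2)] by (auto simp: lessThan_atLeast0)
  obtain \<mu> where \<mu>: "inj_on \<mu> A" "\<mu> ` A \<subseteq> B"
    using card_le_inj[OF assms(2-4)] by blast
  define L where "L = {xs. set xs \<subseteq> {..<2 ^ s :: nat} \<and> length xs = Suc (card A)}"
  have "card B \<le> card L"
    using assms(5) by (simp add: L_def card_lists_length_eq power_mult power_add mult.commute)
  then obtain code where "code ` B \<subseteq> L" "inj_on code B"
    using card_le_inj[OF assms(3)] by (metis L_def finite_lessThan finite_lists_length_eq)
  then have "coded_complete_bipartite A B f (card A) \<mu> code (2 ^ s)"
    using assms(1) f \<mu> by unfold_locales (auto simp: L_def)
  then show ?thesis
    by blast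
qed

lemma bounded_complete_bipartite_ordered:
  assumes "A \<inter> B = {}" "finite A" "finite B" "card A \<le> card B" "card B \<le> 2 ^ (s * (card A + 1))"
  defines "S \<equiv> incidence_structure (complete_bipartite A B)"
  shows "\<exists>P. (\<forall>i<4 + 2 ^ s. P i \<subseteq> fst S) \<and>
           linear_order_on (fst S) {(x, y). x \<in> fst S \<and> y \<in> fst S \<and> sat S (asg2 x y) P (order_formula (2 ^ s))}"
proof -
  obtain f \<mu> code where "coded_complete_bipartite A B f (card A) \<mu> code (2 ^ s)"
    using coded_complete_bipartite_exists[OF assms(1-5)] by blast
  then interpret coded_complete_bipartite A B f "card A" \<mu> code "2 ^ s" .
  have "S = (U, R)"
    by (simp add: S_def U_def R_def E_def complete_bipartite_def)
  then show ?thesis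
    using order_formula_linear param_subset_U by auto
qed

lemma order_formula_defines_order:
  assumes "\<forall>G\<in>C. finite_complete_bipartite G"
    and bound: "\<forall>G\<in>C. \<forall>n m. is_K G n m \<and> n \<le> m \<longrightarrow> m \<le> 2 ^ (s * (n + 1))"
  shows "mso_defines_order (order_formula (2 ^ s)) (4 + 2 ^ s) (incidence_structure ` C)"
proof -
  have ordered: "\<exists>P. (\<forall>i<4 + 2 ^ s. P i \<subseteq> fst S) \<and>
      linear_order_on (fst S) {(x, y). x \<in> fst S \<and> y \<in> fst S \<and> sat S (asg2 x y) P (order_formula (2 ^ s))}"
    if S: "S \<in> incidence_structure ` C" for S
  proof -
    obtain G where G: "G \<in> C" "S = incidence_structure G"
      using S by blast
    have "finite_complete_bipartite G" "\<forall>n m. is_K G n m \<and> n \<le> m \<longrightarrow> m \<le> 2 ^ (s * (n + 1))"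
      using assms G(1) by blast+
    then obtain A B where AB: "A \<inter> B = {}" "finite A" "finite B" "card A \<le> card B"
      "card B \<le> 2 ^ (s * (card A + 1))" and "G = complete_bipartite A B"
      by (rule is_K_bounded_sides)
    then show ?thesis
      using bounded_complete_bipartite_ordered[OF AB] G(2) by simp
  qed
  show ?thesis
    unfolding mso_defines_order_def by (intro conjI ballI impI free_vars_order_formula) (erule ordered)
qed

theorem lemma4p26:
  fixes C :: "('v set \<times> 'v set set) set"
  assumes "\<forall>G\<in>C. finite_complete_bipartite G"
  shows "MSO2_orderable C \<longleftrightarrow>
           (\<exists>s::nat. \<forall>G\<in>C. \<forall>n m. is_K G n m \<and> n \<le> m \<longrightarrow> m \<le> 2 ^ (s * (n + 1)))"
proof
  assume "MSO2_orderable C"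
  then obtain \<phi> k where "mso_defines_order \<phi> k (incidence_structure ` C)"
    unfolding MSO2_orderable_def by blast
  then show "\<exists>s. \<forall>G\<in>C. \<forall>n m. is_K G n m \<and> n \<le> m \<longrightarrow> m \<le> 2 ^ (s * (n + 1))"
    using mso_order_complete_bipartite_bound by blast
next
  assume "\<exists>s. \<forall>G\<in>C. \<forall>n m. is_K G n m \<and> n \<le> m \<longrightarrow> m \<le> 2 ^ (s * (n + 1))"
  then show "MSO2_orderable C"
    unfolding MSO2_orderable_def using order_formula_defines_order[OF assms] by blast
qed

end
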